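(* Let $(\lambda,\omega)$ be a stable Hamiltonian structure on a closed 3-manifold $M$, with integrable region $U=U_1\sqcup\dots\sqcup U_k$ as in the structure theorem. Then there exist arbitrarily $C^\infty$-small perturbations of $(\lambda,\omega)$, compactly supported in the interior of $U$ and $T^2$-invariant on each $U_i$, yielding a stable Hamiltonian structure $(\tilde\lambda,\tilde\omega)$ such that the slope of $\ker\tilde\omega$ (equivalently of its Reeb vector field) is non-constant on each connected component $U_i$.
   Context: A stable Hamiltonian structure (SHS) on an oriented 3-manifold $M$ is a pair $(\lambda,\omega)$ with $\lambda\wedge\omega>0$, $d\omega=0$, $\ker\omega\subset\ker d\lambda$; its Reeb vector field $X$ satisfies $\lambda(X)=1$, $\iota_X\omega=0$. Structure theorem (Cieliebak–Volkov): there exist a compact $X$-invariant 3-submanifold $N$, a disjoint union $U=U_1\sqcup\dots\sqcup U_k$ of compact regions $U_i\cong T^2\times[0,1]$ with $N\cap U=\partial N\cap\partial U$, $N\cup U=M$, such that (among other properties) on each $U_i$ the SHS is $T^2$-invariant: in coordinates $(x,y,t)$ one has $\lambda=g_1(t)dx+g_2(t)dy+g_3(t)dt$ and $\omega=h_1(t)dt\wedge dx+h_2(t)dt\wedge dy$. The slope of $\ker\omega$ on $T^2\times\{t\}$ is the slope of the linear vector field $h_1(t)\partial_x+h_2(t)\partial_y$ spanning $\ker\omega$ there. *)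

theory Defs
  imports "HOL-Analysis.Analysis"
begin

text \<open>A T2-invariant
form on T2 x [0,1] is described by its coefficient functions of t; we take them
as smooth functions on the real line (any smooth function on [0,1] extends).\<close>
definition smooth_fun :: "(real \<Rightarrow> real) \<Rightarrow> bool" where
  "smooth_fun f \<longleftrightarrow> (\<forall>j x. ((deriv ^^ j) f) differentiable (at x))"

text \<open>The T2-invariant pair lambda = g1 dx + g2 dy + g3 dt,
omega = h1 dt/\dx + h2 dt/\dy on T2 x [0,1] (coordinates x, y, t) is a stable
Hamiltonian structure, where the orientation of T2 x [0,1] is sigma * dx/\dy/\dt,
sigma = 1 or -1.  Unfolded:
  lambda /\ omega = (g2 h1 - g1 h2) dx/\dy/\dt, so lambda/\omega > 0 iff
    sigma (g2 h1 - g1 h2) > 0;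
  d omega = 0 holds automatically;
  ker omega = span(-h2 d/dx + h1 d/dy) and d lambda = dt /\ (g1' dx + g2' dy), so
    ker omega \<subseteq> ker d lambda iff g1' h2 = g2' h1.\<close>
definition T2_inv_SHS ::
  "real \<Rightarrow> (real \<Rightarrow> real) \<Rightarrow> (real \<Rightarrow> real) \<Rightarrow> (real \<Rightarrow> real)
     \<Rightarrow> (real \<Rightarrow> real) \<Rightarrow> (real \<Rightarrow> real) \<Rightarrow> bool" where
  "T2_inv_SHS \<sigma> g1 g2 g3 h1 h2 \<longleftrightarrow>
     smooth_fun g1 \<and> smooth_fun g2 \<and> smooth_fun g3 \<and> smooth_fun h1 \<and> smooth_fun h2 \<and>
     (\<forall>t\<in>{0..1}. \<sigma> * (g2 t * h1 t - g1 t * h2 t) > 0) \<and>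
     (\<forall>t\<in>{0..1}. deriv g1 t * h2 t = deriv g2 t * h1 t)"

text \<open>The slope of ker omega on T2 x {t} is the slope of the linear vector field
h1 d/dx + h2 d/dy, i.e. the point [h1 t : h2 t] of RP1.  It is constant on
[0,1] iff all these directions are parallel.\<close>
definition constant_slope :: "(real \<Rightarrow> real) \<Rightarrow> (real \<Rightarrow> real) \<Rightarrow> bool" where
  "constant_slope h1 h2 \<longleftrightarrow> (\<forall>s\<in>{0..1}. \<forall>t\<in>{0..1}. h1 s * h2 t = h2 s * h1 t)"

definition Cm_close :: "nat \<Rightarrow> real \<Rightarrow> (real \<Rightarrow> real) \<Rightarrow> (real \<Rightarrow> real) \<Rightarrow> bool" where
  "Cm_close m \<epsilon> f g \<longleftrightarrow> (\<forall>j\<le>m. \<forall>t\<in>{0..1}. \<bar>(deriv ^^ j) f t - (deriv ^^ j) g t\<bar> < \<epsilon>)"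

definition agree_near_boundary :: "(real \<Rightarrow> real) \<Rightarrow> (real \<Rightarrow> real) \<Rightarrow> bool" where
  "agree_near_boundary f g \<longleftrightarrow> (\<exists>d>0. \<forall>t. (t \<le> d \<or> t \<ge> 1 - d) \<longrightarrow> f t = g t)"

end

theory Submission
  imports Defs "HOL-Computational_Algebra.Polynomial"
begin

text \<open>Only components on which ker \<omega> has constant slope need to be perturbed. There one
  rotates (h1, h2) at each t by the small angle \<delta> \<phi> t, where \<phi> is compactly supported in the
  interior of [0, 1]. The condition that (g1', g2') is parallel to (h1, h2) is kept by rotating
  (g1', g2') by the same angle, i.e. by adding \<delta> \<Gamma> to (g1, g2) with
  \<Gamma>' = \<phi> (- g2', g1'). For \<Gamma> to vanish near both ends, \<phi> must be L2-orthogonal to g1' and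
  g2'; a nontrivial combination of three bumps with disjoint supports achieves this. Since
  parallel nonzero vectors are never orthogonal, rotating (h1, h2) at a point where \<phi> \<noteq> 0 but
  not near t = 0 makes the slope non-constant, while positivity of \<lambda> \<and> \<omega> and C^m-closeness
  hold for all small \<delta> by compactness of [0, 1].\<close>

section \<open>Smooth functions\<close>

lemma smooth_fun_higher_deriv_differentiable:
  "smooth_fun f \<Longrightarrow> (deriv ^^ j) f differentiable (at x)"
  unfolding smooth_fun_def by blast

lemma smooth_fun_differentiable: "smooth_fun f \<Longrightarrow> f differentiable (at x)"
  using smooth_fun_higher_deriv_differentiable[of f 0] by simp

lemma smooth_fun_DERIV: "smooth_fun f \<Longrightarrow> (f has_real_derivative deriv f x) (at x)"
  using smooth_fun_differentiable DERIV_deriv_iff_real_differentiable by blast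

lemma smooth_fun_continuous_on: "smooth_fun f \<Longrightarrow> continuous_on S f"
  by (meson smooth_fun_differentiable differentiable_imp_continuous_within
      continuous_at_imp_continuous_on)

lemma smooth_fun_deriv: "smooth_fun f \<Longrightarrow> smooth_fun (deriv f)"
  unfolding smooth_fun_def by (metis funpow_Suc_right comp_apply)

lemma smooth_fun_if_DERIV:
  assumes "\<And>x. (F has_real_derivative f x) (at x)" and "smooth_fun f"
  shows "smooth_fun F"
  unfolding smooth_fun_def
proof (intro allI)
  fix j x
  have "deriv F = f"
    using assms(1) DERIV_imp_deriv by blast
  then show "(deriv ^^ j) F differentiable at x"
    using assms unfolding smooth_fun_def real_differentiable_def
    by (cases j) (auto simp: funpow_Suc_right simp del: funpow.simps)
qed

lemma higher_deriv_add_scaled: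
  fixes f g :: "real \<Rightarrow> real"
  assumes "\<And>i x. i < j \<Longrightarrow> (deriv ^^ i) f differentiable (at x)"
    and "\<And>i x. i < j \<Longrightarrow> (deriv ^^ i) g differentiable (at x)"
  shows "(deriv ^^ j) (\<lambda>x. f x + c * g x) = (\<lambda>x. (deriv ^^ j) f x + c * (deriv ^^ j) g x)"
  using assms
proof (induction j)
  case 0
  then show ?case by simp
next
  case (Suc j)
  show ?case
  proof
    fix x
    have "((\<lambda>x. (deriv ^^ j) f x + c * (deriv ^^ j) g x) has_real_derivative
            (deriv ^^ Suc j) f x + c * (deriv ^^ Suc j) g x) (at x)"
      using Suc.prems[of j x] by (auto intro!: derivative_eq_intros
          simp: DERIV_deriv_iff_real_differentiable[symmetric])
    then show "(deriv ^^ Suc j) (\<lambda>x. f x + c * g x) x = (deriv ^^ Suc j) f x + c * (deriv ^^ Suc j) g x"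
      using Suc by (simp add: DERIV_imp_deriv)
  qed
qed

lemma smooth_fun_add_scaled:
  assumes "smooth_fun f" "smooth_fun g"
  shows "smooth_fun (\<lambda>x. f x + c * g x)"
  unfolding smooth_fun_def
proof (intro allI)
  fix j x
  show "(deriv ^^ j) (\<lambda>x. f x + c * g x) differentiable (at x)"
    using assms
    by (simp add: higher_deriv_add_scaled smooth_fun_higher_deriv_differentiable
        differentiable_add differentiable_mult)
qed

lemma smooth_fun_const: "smooth_fun (\<lambda>x. c)"
proof -
  have "(deriv ^^ Suc j) (\<lambda>x::real. c) = (\<lambda>x. 0)" for j
    by (induction j) (auto simp: deriv_const)
  then show ?thesis
    unfolding smooth_fun_def by (metis funpow_0 differentiable_const not0_implies_Suc)
qed

lemma smooth_fun_mult:
  assumes "smooth_fun f" "smooth_fun g"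
  shows "smooth_fun (\<lambda>x. f x * g x)"
proof -
  have "(deriv ^^ n) (\<lambda>x. f x * g x) differentiable (at x)"
    if "smooth_fun f" "smooth_fun g" for n f g and x :: real
    using that
  proof (induction n arbitrary: f g x rule: less_induct)
    case (less n)
    show ?case
    proof (cases n)
      case 0
      then show ?thesis
        using less.prems by (simp add: smooth_fun_differentiable differentiable_mult)
    next
      case (Suc i)
      have "deriv (\<lambda>x. f x * g x) = (\<lambda>x. deriv f x * g x + 1 * (f x * deriv g x))"
        using less.prems by (intro ext DERIV_imp_deriv)
          (auto intro!: derivative_eq_intros smooth_fun_DERIV)
      then have "(deriv ^^ n) (\<lambda>x. f x * g x)
          = (deriv ^^ i) (\<lambda>x. deriv f x * g x + 1 * (f x * deriv g x))"
        using Suc by (simp add: funpow_Suc_right del: funpow.simps)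
      also have "\<dots> = (\<lambda>x. (deriv ^^ i) (\<lambda>x. deriv f x * g x) x
                         + 1 * (deriv ^^ i) (\<lambda>x. f x * deriv g x) x)"
        using Suc less.prems by (intro higher_deriv_add_scaled less.IH) (auto simp: smooth_fun_deriv)
      finally show ?thesis
        using Suc less.prems by (auto intro!: differentiable_add less.IH simp: smooth_fun_deriv)
    qed
  qed
  then show ?thesis
    using assms unfolding smooth_fun_def by blast
qed

lemma smooth_fun_add: "smooth_fun f \<Longrightarrow> smooth_fun g \<Longrightarrow> smooth_fun (\<lambda>x. f x + g x)"
  using smooth_fun_add_scaled[of f g 1] by simp

lemma smooth_fun_cmult: "smooth_fun f \<Longrightarrow> smooth_fun (\<lambda>x. c * f x)"
  using smooth_fun_mult[OF smooth_fun_const] .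

lemma smooth_fun_minus: "smooth_fun f \<Longrightarrow> smooth_fun (\<lambda>x. - f x)"
  using smooth_fun_cmult[of f "- 1"] by simp

lemma higher_deriv_compose_affine:
  assumes "smooth_fun f"
  shows "(deriv ^^ j) (\<lambda>x. f (c * x + d)) = (\<lambda>x. c ^ j * (deriv ^^ j) f (c * x + d))"
proof (induction j)
  case 0
  then show ?case by simp
next
  case (Suc j)
  show ?case
  proof
    fix x
    have "((deriv ^^ j) f has_real_derivative (deriv ^^ Suc j) f (c * x + d)) (at (c * x + d))"
      using assms smooth_fun_higher_deriv_differentiable
      by (simp add: DERIV_deriv_iff_real_differentiable)
    moreover have "((\<lambda>x. c * x + d) has_real_derivative c) (at x)"
      by (auto intro!: derivative_eq_intros)
    ultimately have "((\<lambda>x. (deriv ^^ j) f (c * x + d)) has_real_derivative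
            (deriv ^^ Suc j) f (c * x + d) * c) (at x)"
      using DERIV_chain2[of "(deriv ^^ j) f" _ "\<lambda>x. c * x + d"] by simp
    then have "((\<lambda>x. c ^ j * (deriv ^^ j) f (c * x + d)) has_real_derivative
            c ^ j * ((deriv ^^ Suc j) f (c * x + d) * c)) (at x)"
      by (rule DERIV_cmult)
    then show "(deriv ^^ Suc j) (\<lambda>x. f (c * x + d)) x = c ^ Suc j * (deriv ^^ Suc j) f (c * x + d)"
      using Suc.IH DERIV_imp_deriv by (simp add: mult_ac)
  qed
qed

lemma smooth_fun_compose_affine:
  assumes "smooth_fun f"
  shows "smooth_fun (\<lambda>x. f (c * x + d))"
  unfolding smooth_fun_def
proof (intro allI)
  fix j x
  have "(deriv ^^ j) f differentiable (at (c * x + d))"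
    using assms smooth_fun_higher_deriv_differentiable by blast
  then have "(\<lambda>x. (deriv ^^ j) f (c * x + d)) differentiable (at x)"
    using differentiable_chain_at[of "\<lambda>x. c * x + d" x "(deriv ^^ j) f"]
    by (simp add: o_def)
  then show "(deriv ^^ j) (\<lambda>x. f (c * x + d)) differentiable (at x)"
    by (simp add: higher_deriv_compose_affine[OF assms] differentiable_mult)
qed

section \<open>A flat function and bump functions\<close>

lemma tendsto_poly_times_exp_minus_at_top: "((\<lambda>z. poly q z * exp (- z)) \<longlongrightarrow> (0::real)) at_top"
proof -
  have "((\<lambda>z. \<Sum>i\<le>degree q. coeff q i * (z ^ i / exp z)) \<longlongrightarrow> (\<Sum>i\<le>degree q. coeff q i * 0)) at_top"
    by (intro tendsto_sum tendsto_mult tendsto_const tendsto_power_div_exp_0)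
  moreover have "poly q z * exp (- z) = (\<Sum>i\<le>degree q. coeff q i * (z ^ i / exp z))" for z
    by (simp add: poly_altdef sum_distrib_left exp_minus divide_inverse mult_ac)
  ultimately show ?thesis by simp
qed

text \<open>All derivatives of exp (-1/x) have this form, and exp (-1/x) beats every power of 1/x,
  so their extensions by 0 to x \<le> 0 are again differentiable.\<close>
definition flat_poly_exp :: "real poly \<Rightarrow> real \<Rightarrow> real" where
  "flat_poly_exp p x = (if x > 0 then poly p (inverse x) * exp (- inverse x) else 0)"

lemma flat_poly_exp_has_derivative:
  "(flat_poly_exp p has_real_derivative flat_poly_exp ([:0, 0, 1:] * (p - pderiv p)) x) (at x)"
proof -
  consider "x > 0" | "x < 0" | "x = 0" by linarith
  then show ?thesis
  proof cases
    case 1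
    have "((\<lambda>y. poly p (inverse y) * exp (- inverse y)) has_real_derivative
            poly (pderiv p) (inverse x) * (- (inverse x * inverse x)) * exp (- inverse x)
            + poly p (inverse x) * (exp (- inverse x) * (inverse x * inverse x))) (at x)"
      using DERIV_mult[OF DERIV_chain2[OF poly_DERIV DERIV_inverse[of x]]
                          DERIV_chain2[OF DERIV_exp DERIV_minus[OF DERIV_inverse[of x]]]] 1
      by (simp add: power2_eq_square algebra_simps)
    also have "poly (pderiv p) (inverse x) * (- (inverse x * inverse x)) * exp (- inverse x)
            + poly p (inverse x) * (exp (- inverse x) * (inverse x * inverse x))
        = flat_poly_exp ([:0, 0, 1:] * (p - pderiv p)) x"
      using 1 by (simp add: flat_poly_exp_def poly_mult poly_diff algebra_simps)
    finally show ?thesis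
      by (rule has_field_derivative_transform_within_open[where S = "{0<..}"])
         (use 1 in \<open>auto simp: flat_poly_exp_def\<close>)
  next
    case 2
    then have "flat_poly_exp ([:0, 0, 1:] * (p - pderiv p)) x = 0"
      by (simp add: flat_poly_exp_def)
    then show ?thesis
      using 2 by (simp only:)
        (rule has_field_derivative_transform_within_open[OF DERIV_const, where S = "{..<0}"],
         auto simp: flat_poly_exp_def)
  next
    case 3
    have "\<forall>\<^sub>F y in at_left 0. y \<in> {-1<..<(0::real)}"
      by (rule eventually_at_left_real) simp
    then have left: "((\<lambda>y. (flat_poly_exp p y - flat_poly_exp p 0) / (y - 0)) \<longlongrightarrow> 0) (at_left 0)"
      by (intro tendsto_eventually) (auto elim!: eventually_mono simp: flat_poly_exp_def)
    \<comment> \<open>for y = 1/z > 0 the difference quotient is z p(z) exp(-z)\<close>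
    have "((\<lambda>y. (flat_poly_exp p y - flat_poly_exp p 0) / (y - 0)) \<longlongrightarrow> 0) (at_right 0)"
      unfolding filterlim_at_right_to_top
      by (rule Lim_transform_eventually[OF tendsto_poly_times_exp_minus_at_top[of "pCons 0 p"]],
          rule eventually_mono[OF eventually_gt_at_top[of 0]])
         (auto simp: flat_poly_exp_def divide_inverse)
    with left have "((\<lambda>y. (flat_poly_exp p y - flat_poly_exp p 0) / (y - 0)) \<longlongrightarrow> 0) (at 0)"
      using filterlim_at_split by blast
    then show ?thesis
      using 3 unfolding has_field_derivative_iff by (simp add: flat_poly_exp_def)
  qed
qed

definition flat_exp :: "real \<Rightarrow> real" where
  "flat_exp = flat_poly_exp 1"

lemma smooth_fun_flat_exp: "smooth_fun flat_exp"
  unfolding smooth_fun_def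
proof (intro allI)
  fix j x
  have "\<exists>p. (deriv ^^ j) flat_exp = flat_poly_exp p"
  proof (induction j)
    case (Suc j)
    then obtain p where "(deriv ^^ j) flat_exp = flat_poly_exp p" by blast
    then show ?case by (auto simp: DERIV_imp_deriv[OF flat_poly_exp_has_derivative])
  qed (auto simp: flat_exp_def)
  then show "(deriv ^^ j) flat_exp differentiable (at x)"
    using flat_poly_exp_has_derivative real_differentiable_def by metis
qed

lemma flat_exp_pos: "x > 0 \<Longrightarrow> flat_exp x > 0"
  and flat_exp_eq_0: "x \<le> 0 \<Longrightarrow> flat_exp x = 0"
  by (auto simp: flat_exp_def flat_poly_exp_def)

definition bump :: "real \<Rightarrow> real \<Rightarrow> real \<Rightarrow> real" where
  "bump a b t = flat_exp (t - a) * flat_exp (b - t)"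

lemma smooth_fun_bump: "smooth_fun (bump a b)"
  using smooth_fun_mult[OF smooth_fun_compose_affine[OF smooth_fun_flat_exp, of 1 "- a"]
                           smooth_fun_compose_affine[OF smooth_fun_flat_exp, of "- 1" b]]
  unfolding bump_def[abs_def] by simp

lemma bump_pos: "a < t \<Longrightarrow> t < b \<Longrightarrow> bump a b t > 0"
  by (simp add: bump_def flat_exp_pos)

lemma bump_eq_0: "t \<le> a \<or> b \<le> t \<Longrightarrow> bump a b t = 0"
  by (auto simp: bump_def flat_exp_eq_0)

section \<open>Primitives and smallness estimates\<close>

lemma integral_eq_0_if_vanishing: "(\<And>x. x \<in> S \<Longrightarrow> f x = 0) \<Longrightarrow> integral S f = 0"
  using integral_cong[of S f "\<lambda>_. 0"] by simp

lemma has_real_derivative_integral_upto: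
  fixes G :: "real \<Rightarrow> real"
  assumes G: "continuous_on UNIV G" and "0 < a" and vanish: "\<And>t. t \<le> a \<Longrightarrow> G t = 0"
  shows "((\<lambda>t. integral {0..t} G) has_real_derivative G x) (at x)"
proof (cases "x < a")
  case True
  have "integral {0..y} G = 0" if "y < a" for y
    using vanish that by (intro integral_eq_0_if_vanishing) simp
  then show ?thesis
    using True vanish[of x]
    by (simp only:)
      (rule has_field_derivative_transform_within_open[OF DERIV_const, where S = "{..<a}"], auto)
next
  case False
  have "((\<lambda>t. integral {0..t} G) has_real_derivative G x) (at x within {0..x + 1})"
    using False \<open>0 < a\<close> by (intro integral_has_real_derivative continuous_on_subset[OF G]) auto
  moreover have "x \<in> interior {0..x + 1}"
    using False \<open>0 < a\<close> by simp
  ultimately show ?thesis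
    by (metis at_within_interior)
qed

lemma integral_upto_eq_0_outside:
  fixes G :: "real \<Rightarrow> real"
  assumes G: "continuous_on UNIV G" and vanish: "\<And>t. t \<le> a \<or> b \<le> t \<Longrightarrow> G t = 0"
    and "b \<le> 1" and total: "integral {0..1} G = 0" and t: "t \<le> a \<or> b \<le> t"
  shows "integral {0..t} G = 0"
proof -
  have int: "G integrable_on {u..v}" for u v
    by (intro integrable_continuous_real continuous_on_subset[OF G]) auto
  consider "t \<le> a" | "t < 0" | "b \<le> t" "0 \<le> t" "t \<le> 1" | "1 < t"
    using t by linarith
  then show ?thesis
  proof cases
    case 1
    then show ?thesis
      using vanish by (intro integral_eq_0_if_vanishing) simp
  next
    case 2
    then show ?thesis by simp
  next
    case 3
    have "integral {0..t} G + integral {t..1} G = 0"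
      using 3 total Henstock_Kurzweil_Integration.integral_combine[OF _ _ int] by simp
    moreover have "integral {t..1} G = 0"
      using 3 vanish by (intro integral_eq_0_if_vanishing) simp
    ultimately show ?thesis by simp
  next
    case 4
    have "integral {0..t} G = integral {0..1} G + integral {1..t} G"
      using 4 Henstock_Kurzweil_Integration.integral_combine[OF _ _ int] by simp
    moreover have "integral {1..t} G = 0"
      using \<open>b \<le> 1\<close> vanish by (intro integral_eq_0_if_vanishing) simp
    ultimately show ?thesis
      using total by simp
  qed
qed

lemma smooth_fun_higher_derivs_bounded:
  assumes "smooth_fun f"
  obtains B where "B > 0" "\<And>j t. j \<le> m \<Longrightarrow> t \<in> {0..1} \<Longrightarrow> \<bar>(deriv ^^ j) f t\<bar> \<le> B"
proof -
  have "continuous_on {0..1} ((deriv ^^ j) f)" for j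
    using assms smooth_fun_higher_deriv_differentiable
    by (meson differentiable_imp_continuous_within continuous_at_imp_continuous_on)
  then have "bounded (\<Union>j\<le>m. (deriv ^^ j) f ` {0..1})"
    by (intro bounded_UN compact_imp_bounded compact_continuous_image ballI) auto
  then show thesis
    using that unfolding bounded_pos by fastforce
qed

lemma eventually_abs_less_at_0: "0 < d \<Longrightarrow> \<forall>\<^sub>F \<delta> in at (0::real). \<bar>\<delta>\<bar> < d"
  unfolding eventually_at by (auto intro!: exI[of _ d])

lemma eventually_Cm_close_add_scaled:
  assumes "smooth_fun f" "smooth_fun p" "0 < \<epsilon>"
  shows "\<forall>\<^sub>F \<delta> in at 0. Cm_close m \<epsilon> (\<lambda>t. f t + \<delta> * p t) f"
proof -
  obtain B where "B > 0" and B: "\<And>j t. j \<le> m \<Longrightarrow> t \<in> {0..1} \<Longrightarrow> \<bar>(deriv ^^ j) p t\<bar> \<le> B"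
    using smooth_fun_higher_derivs_bounded[OF assms(2)] by blast
  have "Cm_close m \<epsilon> (\<lambda>t. f t + \<delta> * p t) f" if "\<bar>\<delta>\<bar> < \<epsilon> / B" for \<delta>
    unfolding Cm_close_def
  proof (intro allI impI ballI)
    fix j t assume "j \<le> m" "t \<in> {0..1::real}"
    have "\<bar>(deriv ^^ j) (\<lambda>t. f t + \<delta> * p t) t - (deriv ^^ j) f t\<bar> = \<bar>\<delta>\<bar> * \<bar>(deriv ^^ j) p t\<bar>"
      using assms by (simp add: higher_deriv_add_scaled smooth_fun_higher_deriv_differentiable abs_mult)
    also have "\<dots> \<le> \<bar>\<delta>\<bar> * B"
      using B \<open>j \<le> m\<close> \<open>t \<in> {0..1}\<close> by (simp add: mult_left_mono)
    also have "\<dots> < \<epsilon>"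
      using that \<open>B > 0\<close> by (simp add: pos_less_divide_eq)
    finally show "\<bar>(deriv ^^ j) (\<lambda>t. f t + \<delta> * p t) t - (deriv ^^ j) f t\<bar> < \<epsilon>" .
  qed
  then show ?thesis
    using eventually_abs_less_at_0[of "\<epsilon> / B"] assms(3) \<open>B > 0\<close> eventually_mono by force
qed

lemma eventually_quadratic_pos:
  fixes q a b :: "real \<Rightarrow> real"
  assumes "continuous_on {0..1} q" "continuous_on {0..1} a" "continuous_on {0..1} b"
    and pos: "\<And>t. t \<in> {0..1} \<Longrightarrow> q t > 0"
  shows "\<forall>\<^sub>F \<delta> in at 0. \<forall>t\<in>{0..1}. q t + \<delta> * a t + \<delta>\<^sup>2 * b t > 0"
proof -
  obtain t0 where "t0 \<in> {0..1}" and t0: "\<And>t. t \<in> {0..1} \<Longrightarrow> q t0 \<le> q t"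
    using continuous_attains_inf[OF compact_Icc _ assms(1)] by auto
  define \<mu> where "\<mu> = q t0"
  have "\<mu> > 0"
    using pos \<open>t0 \<in> {0..1}\<close> by (simp add: \<mu>_def)
  have "bounded ((\<lambda>t. \<bar>a t\<bar> + \<bar>b t\<bar>) ` {0..1})"
    using assms(2,3) by (intro compact_imp_bounded compact_continuous_image continuous_intros) auto
  then obtain C where "C > 0" and C: "\<And>t. t \<in> {0..1} \<Longrightarrow> \<bar>a t\<bar> + \<bar>b t\<bar> \<le> C"
    unfolding bounded_pos by force
  have "q t + \<delta> * a t + \<delta>\<^sup>2 * b t > 0" if "\<bar>\<delta>\<bar> < min 1 (\<mu> / C)" "t \<in> {0..1}" for \<delta> t
  proof -
    have "\<delta>\<^sup>2 = \<bar>\<delta>\<bar> * \<bar>\<delta>\<bar>"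
      by (simp add: power2_eq_square)
    also have "\<dots> \<le> \<bar>\<delta>\<bar> * 1"
      using that(1) by (intro mult_left_mono) auto
    finally have "\<delta>\<^sup>2 \<le> \<bar>\<delta>\<bar>" by simp
    have "\<bar>\<delta> * a t + \<delta>\<^sup>2 * b t\<bar> \<le> \<bar>\<delta>\<bar> * \<bar>a t\<bar> + \<delta>\<^sup>2 * \<bar>b t\<bar>"
      using abs_triangle_ineq[of "\<delta> * a t" "\<delta>\<^sup>2 * b t"] by (simp add: abs_mult)
    also have "\<dots> \<le> \<bar>\<delta>\<bar> * (\<bar>a t\<bar> + \<bar>b t\<bar>)"
      using \<open>\<delta>\<^sup>2 \<le> \<bar>\<delta>\<bar>\<close> by (simp add: distrib_left mult_right_mono)
    also have "\<dots> \<le> \<bar>\<delta>\<bar> * C"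
      using C that(2) by (simp add: mult_left_mono)
    also have "\<dots> < \<mu>"
      using that(1) \<open>C > 0\<close> by (simp add: pos_less_divide_eq)
    finally show ?thesis
      using t0[OF that(2)] unfolding \<mu>_def by linarith
  qed
  then show ?thesis
    using eventually_abs_less_at_0[of "min 1 (\<mu> / C)"] \<open>\<mu> > 0\<close> \<open>C > 0\<close>
    by (auto elim: eventually_mono)
qed

section \<open>Rotating the kernel of \<omega>\<close>

lemma exists_orthogonal_to_two:
  fixes a b :: "real \<times> real \<times> real"
  obtains c where "c \<noteq> 0" "c \<bullet> a = 0" "c \<bullet> b = 0"
proof -
  have "card {a, b} \<le> 2"
    by (simp add: card_insert_if)
  then have "dim {a, b} < DIM(real \<times> real \<times> real)"
    using dim_le_card'[of "{a, b}"] by simp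
  then show thesis
    by (rule orthogonal_to_subspace_exists)
      (metis that orthogonal_def span_base insertI1 insertI2)
qed

lemma integral_combination3_mult:
  fixes \<rho>1 \<rho>2 \<rho>3 f :: "real \<Rightarrow> real"
  assumes "continuous_on {a..b} \<rho>1" "continuous_on {a..b} \<rho>2" "continuous_on {a..b} \<rho>3"
    and "continuous_on {a..b} f"
  shows "integral {a..b} (\<lambda>t. (c1 * \<rho>1 t + c2 * \<rho>2 t + c3 * \<rho>3 t) * f t)
    = (c1, c2, c3) \<bullet> (integral {a..b} (\<lambda>t. \<rho>1 t * f t), integral {a..b} (\<lambda>t. \<rho>2 t * f t),
        integral {a..b} (\<lambda>t. \<rho>3 t * f t))"
proof -
  have int: "(\<lambda>t. \<rho> t * f t) integrable_on {a..b}" if "continuous_on {a..b} \<rho>" for \<rho>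
    by (intro integrable_continuous_real continuous_intros that assms(4))
  have "((\<lambda>t. c1 * (\<rho>1 t * f t) + c2 * (\<rho>2 t * f t) + c3 * (\<rho>3 t * f t)) has_integral
      (c1, c2, c3) \<bullet> (integral {a..b} (\<lambda>t. \<rho>1 t * f t), integral {a..b} (\<lambda>t. \<rho>2 t * f t),
        integral {a..b} (\<lambda>t. \<rho>3 t * f t))) {a..b}"
    unfolding inner_Pair inner_real_def add.assoc[symmetric]
    by (intro has_integral_add has_integral_mult_right integrable_integral int assms(1-3))
  then show ?thesis
    by (simp add: integral_unique algebra_simps)
qed

lemma exists_bump_combination_orthogonal:
  fixes u v :: "real \<Rightarrow> real"
  assumes u: "continuous_on {0..1} u" and v: "continuous_on {0..1} v" and "l < r"
  obtains \<phi> where "smooth_fun \<phi>" "\<And>t. t \<le> l \<or> r \<le> t \<Longrightarrow> \<phi> t = 0" "\<exists>t. \<phi> t \<noteq> 0"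
    "integral {0..1} (\<lambda>t. \<phi> t * u t) = 0" "integral {0..1} (\<lambda>t. \<phi> t * v t) = 0"
proof -
  define h where "h = (r - l) / 3"
  have "h > 0" "l + 3 * h = r"
    using \<open>l < r\<close> by (simp_all add: h_def field_simps)
  define \<rho> where "\<rho> i = bump (l + i * h) (l + (i + 1) * h)" for i :: real
  define I where "I f = (integral {0..1} (\<lambda>t. \<rho> 0 t * f t),
      integral {0..1} (\<lambda>t. \<rho> 1 t * f t), integral {0..1} (\<lambda>t. \<rho> 2 t * f t))" for f
  obtain c1 c2 c3 where c: "(c1, c2, c3) \<noteq> 0" "(c1, c2, c3) \<bullet> I u = 0" "(c1, c2, c3) \<bullet> I v = 0"
    by (metis exists_orthogonal_to_two prod_cases3)
  define \<phi> where "\<phi> t = c1 * \<rho> 0 t + c2 * \<rho> 1 t + c3 * \<rho> 2 t" for t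
  have integral_\<phi>: "integral {0..1} (\<lambda>t. \<phi> t * f t) = (c1, c2, c3) \<bullet> I f"
    if "continuous_on {0..1} f" for f
    unfolding \<phi>_def I_def \<rho>_def
    by (intro integral_combination3_mult that smooth_fun_continuous_on smooth_fun_bump)
  show thesis
  proof
    show "smooth_fun \<phi>"
      unfolding \<phi>_def[abs_def] \<rho>_def by (intro smooth_fun_add smooth_fun_cmult smooth_fun_bump)
    show "\<phi> t = 0" if "t \<le> l \<or> r \<le> t" for t
      using that \<open>h > 0\<close> \<open>l + 3 * h = r\<close> by (auto simp: \<phi>_def \<rho>_def bump_eq_0)
    have "\<phi> (l + h/2) = c1 * \<rho> 0 (l + h/2)" "\<phi> (l + 3*h/2) = c2 * \<rho> 1 (l + 3*h/2)"
      "\<phi> (l + 5*h/2) = c3 * \<rho> 2 (l + 5*h/2)"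
      using \<open>h > 0\<close> by (simp_all add: \<phi>_def \<rho>_def bump_eq_0)
    moreover have "\<rho> 0 (l + h/2) > 0" "\<rho> 1 (l + 3*h/2) > 0" "\<rho> 2 (l + 5*h/2) > 0"
      using \<open>h > 0\<close> unfolding \<rho>_def by (simp_all add: bump_pos)
    moreover have "c1 \<noteq> 0 \<or> c2 \<noteq> 0 \<or> c3 \<noteq> 0"
      using c(1) by (simp add: zero_prod_def)
    ultimately have "\<phi> (l + h/2) \<noteq> 0 \<or> \<phi> (l + 3*h/2) \<noteq> 0 \<or> \<phi> (l + 5*h/2) \<noteq> 0"
      by auto
    then show "\<exists>t. \<phi> t \<noteq> 0"
      by blast
    show "integral {0..1} (\<lambda>t. \<phi> t * u t) = 0" "integral {0..1} (\<lambda>t. \<phi> t * v t) = 0"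
      using integral_\<phi> u v c by simp_all
  qed
qed

lemma exists_compactly_supported_primitive:
  fixes G :: "real \<Rightarrow> real"
  assumes "smooth_fun G" and "0 < a" "b \<le> 1" and vanish: "\<And>t. t \<le> a \<or> b \<le> t \<Longrightarrow> G t = 0"
    and "integral {0..1} G = 0"
  obtains \<Gamma> where "smooth_fun \<Gamma>" "\<And>x. (\<Gamma> has_real_derivative G x) (at x)"
    "\<And>t. t \<le> a \<or> b \<le> t \<Longrightarrow> \<Gamma> t = 0"
proof
  have G: "continuous_on UNIV G"
    using assms(1) by (rule smooth_fun_continuous_on)
  show D: "((\<lambda>t. integral {0..t} G) has_real_derivative G x) (at x)" for x
    using G \<open>0 < a\<close> vanish by (rule has_real_derivative_integral_upto) auto
  show "smooth_fun (\<lambda>t. integral {0..t} G)"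
    using D assms(1) by (rule smooth_fun_if_DERIV)
  show "integral {0..t} G = 0" if "t \<le> a \<or> b \<le> t" for t
    using G vanish assms(3,5) that by (rule integral_upto_eq_0_outside)
qed

lemma cross_eq_0_rotate:
  fixes a1 a2 h1 h2 s :: real
  assumes "a1 * h2 = a2 * h1"
  shows "(a1 - s * a2) * (h2 + s * h1) = (a2 + s * a1) * (h1 - s * h2)"
proof -
  have "(a1 - s * a2) * (h2 + s * h1) - (a2 + s * a1) * (h1 - s * h2) = (a1 * h2 - a2 * h1) * (1 + s\<^sup>2)"
    by (simp add: algebra_simps power2_eq_square)
  then show ?thesis
    using assms by simp
qed

text \<open>The map y \<mapsto> y + s J y is a rotation by arctan s followed by a dilation, so for s \<noteq> 0
  it moves the line through y.\<close>
lemma rotate_not_parallel: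
  fixes x1 x2 y1 y2 s :: real
  assumes par: "x1 * y2 = x2 * y1" and "s \<noteq> 0" and "x1 \<noteq> 0 \<or> x2 \<noteq> 0" "y1 \<noteq> 0 \<or> y2 \<noteq> 0"
  shows "x1 * (y2 + s * y1) \<noteq> x2 * (y1 - s * y2)"
proof
  assume "x1 * (y2 + s * y1) = x2 * (y1 - s * y2)"
  with par have "s * (x1 * y1 + x2 * y2) = 0"
    by (simp add: algebra_simps)
  then have "x1 * y1 + x2 * y2 = 0"
    using \<open>s \<noteq> 0\<close> by simp
  moreover have "(x1\<^sup>2 + x2\<^sup>2) * (y1\<^sup>2 + y2\<^sup>2) = (x1 * y1 + x2 * y2)\<^sup>2 + (x1 * y2 - x2 * y1)\<^sup>2"
    by (simp add: algebra_simps power2_eq_square)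
  ultimately have "(x1\<^sup>2 + x2\<^sup>2) * (y1\<^sup>2 + y2\<^sup>2) = 0"
    using par by simp
  moreover have "(x1\<^sup>2 + x2\<^sup>2) * (y1\<^sup>2 + y2\<^sup>2) > 0"
    using assms(3,4) by (intro mult_pos_pos) (simp_all add: sum_power2_gt_zero_iff)
  ultimately show False
    by auto
qed

definition small_compact_perturbation :: "nat \<Rightarrow> real \<Rightarrow> (real \<Rightarrow> real) \<Rightarrow> (real \<Rightarrow> real) \<Rightarrow> bool"
  where "small_compact_perturbation m \<epsilon> f' f \<longleftrightarrow> Cm_close m \<epsilon> f' f \<and> agree_near_boundary f' f"

lemma small_compact_perturbation_refl: "0 < \<epsilon> \<Longrightarrow> small_compact_perturbation m \<epsilon> f f"
  unfolding small_compact_perturbation_def Cm_close_def agree_near_boundary_def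
  by (auto intro: exI[of _ 1])

lemma eventually_small_compact_perturbation_add_scaled:
  assumes "smooth_fun f" "smooth_fun p" "0 < \<epsilon>" "0 < d"
    and "\<And>t. t \<le> d \<or> 1 - d \<le> t \<Longrightarrow> p t = 0"
  shows "\<forall>\<^sub>F \<delta> in at 0. small_compact_perturbation m \<epsilon> (\<lambda>t. f t + \<delta> * p t) f"
proof -
  have "agree_near_boundary (\<lambda>t. f t + \<delta> * p t) f" for \<delta>
    using assms(4,5) unfolding agree_near_boundary_def by auto
  then show ?thesis
    using eventually_Cm_close_add_scaled[OF assms(1-3)]
    unfolding small_compact_perturbation_def by simp
qed

lemma eventually_T2_inv_SHS_rotation:
  assumes shs: "T2_inv_SHS \<sigma> g1 g2 g3 h1 h2"
    and "smooth_fun \<phi>" "smooth_fun \<Gamma>1" "smooth_fun \<Gamma>2"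
    and d\<Gamma>1: "\<And>t. (\<Gamma>1 has_real_derivative - (\<phi> t * deriv g2 t)) (at t)"
    and d\<Gamma>2: "\<And>t. (\<Gamma>2 has_real_derivative \<phi> t * deriv g1 t) (at t)"
  shows "\<forall>\<^sub>F \<delta> in at 0. T2_inv_SHS \<sigma> (\<lambda>t. g1 t + \<delta> * \<Gamma>1 t) (\<lambda>t. g2 t + \<delta> * \<Gamma>2 t) g3
           (\<lambda>t. h1 t + \<delta> * - (\<phi> t * h2 t)) (\<lambda>t. h2 t + \<delta> * (\<phi> t * h1 t))"
proof -
  have smooth: "smooth_fun g1" "smooth_fun g2" "smooth_fun g3" "smooth_fun h1" "smooth_fun h2"
    and pos: "\<And>t. t \<in> {0..1} \<Longrightarrow> \<sigma> * (g2 t * h1 t - g1 t * h2 t) > 0"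
    and ker: "\<And>t. t \<in> {0..1} \<Longrightarrow> deriv g1 t * h2 t = deriv g2 t * h1 t"
    using shs unfolding T2_inv_SHS_def by auto
  \<comment> \<open>coefficients of \<delta> and \<delta>^2 in \<sigma> (g2 h1 - g1 h2) of the perturbed structure\<close>
  define a where "a t = \<sigma> * (\<Gamma>2 t * h1 t - g2 t * \<phi> t * h2 t - \<Gamma>1 t * h2 t - g1 t * \<phi> t * h1 t)" for t
  define b where "b t = - \<sigma> * (\<Gamma>2 t * \<phi> t * h2 t + \<Gamma>1 t * \<phi> t * h1 t)" for t
  have "\<forall>\<^sub>F \<delta> in at 0. \<forall>t\<in>{0..1}. \<sigma> * (g2 t * h1 t - g1 t * h2 t) + \<delta> * a t + \<delta>\<^sup>2 * b t > 0"
    using pos assms(2-4) smooth unfolding a_def b_def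
    by (intro eventually_quadratic_pos continuous_intros) (auto intro: smooth_fun_continuous_on)
  moreover have "T2_inv_SHS \<sigma> (\<lambda>t. g1 t + \<delta> * \<Gamma>1 t) (\<lambda>t. g2 t + \<delta> * \<Gamma>2 t) g3
           (\<lambda>t. h1 t + \<delta> * - (\<phi> t * h2 t)) (\<lambda>t. h2 t + \<delta> * (\<phi> t * h1 t))"
    if quadratic_pos: "\<forall>t\<in>{0..1}. \<sigma> * (g2 t * h1 t - g1 t * h2 t) + \<delta> * a t + \<delta>\<^sup>2 * b t > 0" for \<delta>
    unfolding T2_inv_SHS_def
  proof (intro conjI ballI)
    show "smooth_fun (\<lambda>t. g1 t + \<delta> * \<Gamma>1 t)" "smooth_fun (\<lambda>t. g2 t + \<delta> * \<Gamma>2 t)" "smooth_fun g3"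
      "smooth_fun (\<lambda>t. h1 t + \<delta> * - (\<phi> t * h2 t))" "smooth_fun (\<lambda>t. h2 t + \<delta> * (\<phi> t * h1 t))"
      by (rule smooth_fun_add_scaled smooth_fun_minus smooth_fun_mult assms(2-4) smooth)+
  next
    fix t :: real assume "t \<in> {0..1}"
    then show "\<sigma> * ((g2 t + \<delta> * \<Gamma>2 t) * (h1 t + \<delta> * - (\<phi> t * h2 t))
                 - (g1 t + \<delta> * \<Gamma>1 t) * (h2 t + \<delta> * (\<phi> t * h1 t))) > 0"
      using quadratic_pos by (simp add: a_def b_def algebra_simps power2_eq_square)
  next
    fix t :: real assume "t \<in> {0..1}"
    have "deriv (\<lambda>t. g1 t + \<delta> * \<Gamma>1 t) t = deriv g1 t - \<delta> * \<phi> t * deriv g2 t"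
      "deriv (\<lambda>t. g2 t + \<delta> * \<Gamma>2 t) t = deriv g2 t + \<delta> * \<phi> t * deriv g1 t"
      using smooth d\<Gamma>1 d\<Gamma>2
      by (auto intro!: DERIV_imp_deriv derivative_eq_intros smooth_fun_DERIV)
    then show "deriv (\<lambda>t. g1 t + \<delta> * \<Gamma>1 t) t * (h2 t + \<delta> * (\<phi> t * h1 t))
             = deriv (\<lambda>t. g2 t + \<delta> * \<Gamma>2 t) t * (h1 t + \<delta> * - (\<phi> t * h2 t))"
      using cross_eq_0_rotate[OF ker[OF \<open>t \<in> {0..1}\<close>], of "\<delta> * \<phi> t"]
      by (simp add: mult.assoc)
  qed
  ultimately show ?thesis
    by (rule eventually_mono)
qed

lemma not_constant_slope_rotation:
  assumes "constant_slope h1 h2" and nonzero: "\<And>t. t \<in> {0..1} \<Longrightarrow> h1 t \<noteq> 0 \<or> h2 t \<noteq> 0"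
    and "\<phi> 0 = 0" "t0 \<in> {0..1}" "\<phi> t0 \<noteq> 0" "\<delta> \<noteq> 0"
  shows "\<not> constant_slope (\<lambda>t. h1 t + \<delta> * - (\<phi> t * h2 t)) (\<lambda>t. h2 t + \<delta> * (\<phi> t * h1 t))"
proof
  assume "constant_slope (\<lambda>t. h1 t + \<delta> * - (\<phi> t * h2 t)) (\<lambda>t. h2 t + \<delta> * (\<phi> t * h1 t))"
  then have "h1 0 * (h2 t0 + (\<delta> * \<phi> t0) * h1 t0) = h2 0 * (h1 t0 - (\<delta> * \<phi> t0) * h2 t0)"
    using \<open>\<phi> 0 = 0\<close> \<open>t0 \<in> {0..1}\<close> unfolding constant_slope_def by (force simp: algebra_simps)
  moreover have "h1 0 * h2 t0 = h2 0 * h1 t0"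
    using assms(1) \<open>t0 \<in> {0..1}\<close> unfolding constant_slope_def by simp
  ultimately show False
    using rotate_not_parallel[of "h1 0" "h2 t0" "h2 0" "h1 t0" "\<delta> * \<phi> t0"]
      nonzero[of 0] nonzero[OF \<open>t0 \<in> {0..1}\<close>] assms(5,6) by auto
qed

lemma exists_rotation_profile:
  assumes "smooth_fun g1" "smooth_fun g2"
  obtains \<phi> \<Gamma>1 \<Gamma>2 t0 where "smooth_fun \<phi>" "smooth_fun \<Gamma>1" "smooth_fun \<Gamma>2"
    "\<And>t. t \<le> 1/8 \<or> 3/4 \<le> t \<Longrightarrow> \<phi> t = 0 \<and> \<Gamma>1 t = 0 \<and> \<Gamma>2 t = 0"
    "t0 \<in> {0..1}" "\<phi> t0 \<noteq> 0"
    "\<And>t. (\<Gamma>1 has_real_derivative - (\<phi> t * deriv g2 t)) (at t)"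
    "\<And>t. (\<Gamma>2 has_real_derivative \<phi> t * deriv g1 t) (at t)"
proof -
  have "continuous_on {0..1} (deriv g1)" "continuous_on {0..1} (deriv g2)"
    using assms by (simp_all add: smooth_fun_continuous_on smooth_fun_deriv)
  then obtain \<phi> where "smooth_fun \<phi>" and \<phi>_vanish: "\<And>t. t \<le> 1/8 \<or> 3/4 \<le> t \<Longrightarrow> \<phi> t = 0"
    and "\<exists>t. \<phi> t \<noteq> 0" and orth: "integral {0..1} (\<lambda>t. \<phi> t * deriv g1 t) = 0"
      "integral {0..1} (\<lambda>t. \<phi> t * deriv g2 t) = 0"
    by (rule exists_bump_combination_orthogonal[where l = "1/8" and r = "3/4"]) auto
  then obtain t0 where "\<phi> t0 \<noteq> 0"
    by blast
  then have "t0 \<in> {0..1}"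
    using \<phi>_vanish[of t0] by fastforce
  have "smooth_fun (\<lambda>t. - (\<phi> t * deriv g2 t))" "smooth_fun (\<lambda>t. \<phi> t * deriv g1 t)"
    using assms \<open>smooth_fun \<phi>\<close> by (simp_all add: smooth_fun_minus smooth_fun_mult smooth_fun_deriv)
  obtain \<Gamma>1 where \<Gamma>1: "smooth_fun \<Gamma>1" "\<And>t. (\<Gamma>1 has_real_derivative - (\<phi> t * deriv g2 t)) (at t)"
    "\<And>t. t \<le> 1/8 \<or> 3/4 \<le> t \<Longrightarrow> \<Gamma>1 t = 0"
    by (rule exists_compactly_supported_primitive[where a = "1/8" and b = "3/4", OF \<open>smooth_fun (\<lambda>t. - (\<phi> t * deriv g2 t))\<close>])
      (use \<phi>_vanish orth in auto)
  obtain \<Gamma>2 where \<Gamma>2: "smooth_fun \<Gamma>2" "\<And>t. (\<Gamma>2 has_real_derivative \<phi> t * deriv g1 t) (at t)"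
    "\<And>t. t \<le> 1/8 \<or> 3/4 \<le> t \<Longrightarrow> \<Gamma>2 t = 0"
    by (rule exists_compactly_supported_primitive[where a = "1/8" and b = "3/4", OF \<open>smooth_fun (\<lambda>t. \<phi> t * deriv g1 t)\<close>])
      (use \<phi>_vanish orth in auto)
  show thesis
    by (rule that[of \<phi> \<Gamma>1 \<Gamma>2 t0])
      (use \<open>smooth_fun \<phi>\<close> \<phi>_vanish \<open>t0 \<in> {0..1}\<close> \<open>\<phi> t0 \<noteq> 0\<close> \<Gamma>1 \<Gamma>2 in auto)
qed

lemma exists_perturbation_of_constant_slope:
  assumes shs: "T2_inv_SHS \<sigma> g1 g2 g3 h1 h2" and "constant_slope h1 h2" and "0 < \<epsilon>"
  shows "\<exists>g1' g2' h1' h2'. T2_inv_SHS \<sigma> g1' g2' g3 h1' h2'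
           \<and> small_compact_perturbation m \<epsilon> g1' g1 \<and> small_compact_perturbation m \<epsilon> g2' g2
           \<and> small_compact_perturbation m \<epsilon> h1' h1 \<and> small_compact_perturbation m \<epsilon> h2' h2
           \<and> \<not> constant_slope h1' h2'"
proof -
  have smooth: "smooth_fun g1" "smooth_fun g2" "smooth_fun h1" "smooth_fun h2"
    and nonzero: "\<And>t. t \<in> {0..1} \<Longrightarrow> h1 t \<noteq> 0 \<or> h2 t \<noteq> 0"
    using shs unfolding T2_inv_SHS_def by force+
  obtain \<phi> \<Gamma>1 \<Gamma>2 t0 where "smooth_fun \<phi>" "smooth_fun \<Gamma>1" "smooth_fun \<Gamma>2"
    and vanish: "\<And>t. t \<le> 1/8 \<or> 3/4 \<le> t \<Longrightarrow> \<phi> t = 0 \<and> \<Gamma>1 t = 0 \<and> \<Gamma>2 t = 0"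
    and t0: "t0 \<in> {0..1}" "\<phi> t0 \<noteq> 0"
    and d\<Gamma>: "\<And>t. (\<Gamma>1 has_real_derivative - (\<phi> t * deriv g2 t)) (at t)"
      "\<And>t. (\<Gamma>2 has_real_derivative \<phi> t * deriv g1 t) (at t)"
    using exists_rotation_profile[OF smooth(1,2)] by blast
  have \<phi>0: "\<phi> 0 = 0"
    using vanish[of 0] by simp
  define g1' where "g1' \<delta> t = g1 t + \<delta> * \<Gamma>1 t" for \<delta> t
  define g2' where "g2' \<delta> t = g2 t + \<delta> * \<Gamma>2 t" for \<delta> t
  define h1' where "h1' \<delta> t = h1 t + \<delta> * - (\<phi> t * h2 t)" for \<delta> t
  define h2' where "h2' \<delta> t = h2 t + \<delta> * (\<phi> t * h1 t)" for \<delta> t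
  have small: "\<forall>\<^sub>F \<delta> in at 0. small_compact_perturbation m \<epsilon> (\<lambda>t. f t + \<delta> * p t) f"
    if "smooth_fun f" "smooth_fun p" "\<And>t. t \<le> 1/8 \<or> 3/4 \<le> t \<Longrightarrow> p t = 0" for f p
    using that \<open>0 < \<epsilon>\<close> by (intro eventually_small_compact_perturbation_add_scaled[where d = "1/8"]) auto
  have "\<forall>\<^sub>F \<delta> in at 0. small_compact_perturbation m \<epsilon> (g1' \<delta>) g1"
    "\<forall>\<^sub>F \<delta> in at 0. small_compact_perturbation m \<epsilon> (g2' \<delta>) g2"
    "\<forall>\<^sub>F \<delta> in at 0. small_compact_perturbation m \<epsilon> (h1' \<delta>) h1"
    "\<forall>\<^sub>F \<delta> in at 0. small_compact_perturbation m \<epsilon> (h2' \<delta>) h2"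
    unfolding g1'_def g2'_def h1'_def h2'_def
    using small[OF smooth(1) \<open>smooth_fun \<Gamma>1\<close>] small[OF smooth(2) \<open>smooth_fun \<Gamma>2\<close>]
      small[OF smooth(3) smooth_fun_minus[OF smooth_fun_mult[OF \<open>smooth_fun \<phi>\<close> smooth(4)]]]
      small[OF smooth(4) smooth_fun_mult[OF \<open>smooth_fun \<phi>\<close> smooth(3)]] vanish by simp_all
  moreover have "\<forall>\<^sub>F \<delta> in at 0. T2_inv_SHS \<sigma> (g1' \<delta>) (g2' \<delta>) g3 (h1' \<delta>) (h2' \<delta>)"
    unfolding g1'_def g2'_def h1'_def h2'_def
    using shs \<open>smooth_fun \<phi>\<close> \<open>smooth_fun \<Gamma>1\<close> \<open>smooth_fun \<Gamma>2\<close> d\<Gamma>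
    by (rule eventually_T2_inv_SHS_rotation)
  moreover have "\<forall>\<^sub>F \<delta> in at 0. \<not> constant_slope (h1' \<delta>) (h2' \<delta>)"
    unfolding h1'_def h2'_def using eventually_neq_at_within[of 0 0 UNIV]
    by (rule eventually_mono) (rule not_constant_slope_rotation[OF \<open>constant_slope h1 h2\<close> nonzero \<phi>0 t0])
  ultimately have "\<forall>\<^sub>F \<delta> in at 0. T2_inv_SHS \<sigma> (g1' \<delta>) (g2' \<delta>) g3 (h1' \<delta>) (h2' \<delta>)
      \<and> small_compact_perturbation m \<epsilon> (g1' \<delta>) g1 \<and> small_compact_perturbation m \<epsilon> (g2' \<delta>) g2
      \<and> small_compact_perturbation m \<epsilon> (h1' \<delta>) h1 \<and> small_compact_perturbation m \<epsilon> (h2' \<delta>) h2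
      \<and> \<not> constant_slope (h1' \<delta>) (h2' \<delta>)"
    by (intro eventually_conj)
  then show ?thesis
    using eventually_happens'[OF at_neq_bot] by blast
qed

lemma exists_perturbation_with_nonconstant_slope:
  assumes "T2_inv_SHS \<sigma> g1 g2 g3 h1 h2" and "0 < \<epsilon>"
  shows "\<exists>g1' g2' g3' h1' h2'. T2_inv_SHS \<sigma> g1' g2' g3' h1' h2'
           \<and> small_compact_perturbation m \<epsilon> g1' g1 \<and> small_compact_perturbation m \<epsilon> g2' g2
           \<and> small_compact_perturbation m \<epsilon> g3' g3 \<and> small_compact_perturbation m \<epsilon> h1' h1
           \<and> small_compact_perturbation m \<epsilon> h2' h2 \<and> \<not> constant_slope h1' h2'"
proof (cases "constant_slope h1 h2")
  case True
  then show ?thesis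
    using exists_perturbation_of_constant_slope[OF assms(1) True assms(2)]
      small_compact_perturbation_refl[OF assms(2)] by blast
next
  case False
  then show ?thesis
    using assms small_compact_perturbation_refl by blast
qed

theorem lemma6p2:
  fixes k :: nat
    and \<sigma> :: "nat \<Rightarrow> real"
    and g1 g2 g3 h1 h2 :: "nat \<Rightarrow> real \<Rightarrow> real"
  assumes "\<forall>i<k. \<sigma> i = 1 \<or> \<sigma> i = -1"
    and "\<forall>i<k. T2_inv_SHS (\<sigma> i) (g1 i) (g2 i) (g3 i) (h1 i) (h2 i)"
  shows "\<forall>\<epsilon>>0. \<forall>m::nat. \<exists>g1' g2' g3' h1' h2' :: nat \<Rightarrow> real \<Rightarrow> real.
           \<forall>i<k. T2_inv_SHS (\<sigma> i) (g1' i) (g2' i) (g3' i) (h1' i) (h2' i)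
             \<and> Cm_close m \<epsilon> (g1' i) (g1 i) \<and> Cm_close m \<epsilon> (g2' i) (g2 i)
             \<and> Cm_close m \<epsilon> (g3' i) (g3 i) \<and> Cm_close m \<epsilon> (h1' i) (h1 i)
             \<and> Cm_close m \<epsilon> (h2' i) (h2 i)
             \<and> agree_near_boundary (g1' i) (g1 i) \<and> agree_near_boundary (g2' i) (g2 i)
             \<and> agree_near_boundary (g3' i) (g3 i) \<and> agree_near_boundary (h1' i) (h1 i)
             \<and> agree_near_boundary (h2' i) (h2 i)
             \<and> \<not> constant_slope (h1' i) (h2' i)"
proof -
  have "\<forall>i. \<exists>a b c d e. i < k \<longrightarrow> T2_inv_SHS (\<sigma> i) a b c d e
      \<and> Cm_close m \<epsilon> a (g1 i) \<and> Cm_close m \<epsilon> b (g2 i) \<and> Cm_close m \<epsilon> c (g3 i)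
      \<and> Cm_close m \<epsilon> d (h1 i) \<and> Cm_close m \<epsilon> e (h2 i)
      \<and> agree_near_boundary a (g1 i) \<and> agree_near_boundary b (g2 i)
      \<and> agree_near_boundary c (g3 i) \<and> agree_near_boundary d (h1 i)
      \<and> agree_near_boundary e (h2 i) \<and> \<not> constant_slope d e"
    if "\<epsilon> > 0" for \<epsilon> m
    \<comment> \<open>only the sign of \<sigma> i (g2 h1 - g1 h2) matters\<close>
    using assms(2) exists_perturbation_with_nonconstant_slope[OF _ that]
    unfolding small_compact_perturbation_def by blast
  then show ?thesis
    by metis
qed

end
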